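(* For every $n\ge1$ there is a bijection $\omega$ from the set of Schröder permutations in $\mathcal{S}_n$ to itself such that for all $k\ge3$ and every Schröder permutation $\pi\in\mathcal{S}_n$, $\pi$ avoids $12\cdots k$ if and only if $\omega(\pi)$ avoids $2\,1\,3\,4\cdots k$.
   Context: A permutation avoids $\tau\in\mathcal{S}_k$ if no subsequence of length $k$ is in the same relative order as $\tau$. A Schröder permutation is a permutation avoiding both $1243$ and $2143$. *)

theory Defs
  imports Main
begin

definition perms :: "nat \<Rightarrow> nat list set" where
  "perms n = {xs. distinct xs \<and> set xs = {1..n}}"

definition contains :: "nat list \<Rightarrow> nat list \<Rightarrow> bool" where
  "contains pi tau \<longleftrightarrow>
     (\<exists>is :: nat list. length is = length tau \<and> sorted_wrt (<) is \<and>
        (\<forall>j \<in> set is. j < length pi) \<and>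
        (\<forall>a < length tau. \<forall>b < length tau.
            (pi ! (is ! a) < pi ! (is ! b)) \<longleftrightarrow> (tau ! a < tau ! b)))"

definition avoids :: "nat list \<Rightarrow> nat list \<Rightarrow> bool" where
  "avoids pi tau \<longleftrightarrow> \<not> contains pi tau"

definition schroeder :: "nat \<Rightarrow> nat list set" where
  "schroeder n = {pi \<in> perms n. avoids pi [1,2,4,3] \<and> avoids pi [2,1,4,3]}"

definition incr_pat :: "nat \<Rightarrow> nat list" where
  "incr_pat k = [1..<k+1]"

definition swap12_pat :: "nat \<Rightarrow> nat list" where
  "swap12_pat k = [2,1] @ [3..<k+1]"

end

(* Write a Schroeder permutation as a @ M # b with M its maximum and s the minimum of a.
   Avoiding 1243 and 2143 forces every entry of a other than s to exceed every entry of b.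
   Hence an increasing subsequence of a @ M # b lies in a @ [M] or in s # b, and so does an
   occurrence of 2134...k for k >= 3. The bijection omega follows this decomposition recursively:
   decreasing lists go to increasing ones and, apart from degenerate cases with a or b empty, the
   images of a and of s # b are glued around M, with s replaced in the image of a by the first
   entry of the image of s # b. That entry lies below all other entries of a, so the replacement
   preserves relative order. By induction, omega xs is a Schroeder list on the same entries that
   contains 2134...k iff xs contains 12...k; the recursion can be undone, so omega is injective,
   hence bijective on the finite set of Schroeder permutations of [n]. *)

theory Submission
  imports Defs "HOL-Library.Sublist"
begin

lemma set_subseq_subset: "subseq ys xs \<Longrightarrow> set ys \<subseteq> set xs"
  by (induction rule: list_emb.induct) auto

lemma sorted_wrt_subseq: "subseq ys xs \<Longrightarrow> sorted_wrt R xs \<Longrightarrow> sorted_wrt R ys"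
  by (induction rule: list_emb.induct) (auto dest: set_subseq_subset)

lemma distinct_subseq: "subseq ys xs \<Longrightarrow> distinct xs \<Longrightarrow> distinct ys"
  by (induction rule: list_emb.induct) (auto dest: set_subseq_subset)

lemma subseq_Cons_self: "subseq xs (x # xs)"
  by (intro list_emb_Cons subseq_order.order_refl)

lemma subseq_Cons_cases:
  assumes "subseq ys (x # xs)"
  obtains "subseq ys xs" | zs where "ys = x # zs" "subseq zs xs"
  using assms by (cases ys) (auto split: if_splits)

lemma subseq_butlast_snoc:
  assumes "subseq ys (xs @ [x])"
  shows "subseq (butlast ys) xs"
proof -
  obtain ys1 ys2 where "ys = ys1 @ ys2" "subseq ys1 xs" "subseq ys2 [x]"
    using assms by (rule subseq_appendE)
  moreover have "ys2 = [] \<or> ys2 = [x]"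
    using \<open>subseq ys2 [x]\<close> by (auto elim: subseq_Cons_cases)
  ultimately show ?thesis
    by (metis append_Nil2 butlast_snoc prefix_imp_subseq prefixeq_butlast subseq_order.order_trans)
qed

lemma subseq_pair_cases:
  "x \<in> set xs \<Longrightarrow> y \<in> set xs \<Longrightarrow> x \<noteq> y \<Longrightarrow> subseq [x, y] xs \<or> subseq [y, x] xs"
  by (induction xs) (auto simp: subseq_singleton_left)

lemma distinct_subset_singleton_subseq: "distinct ys \<Longrightarrow> set ys \<subseteq> {s} \<Longrightarrow> subseq ys [s]"
  by (cases ys) (auto simp: subset_singleton_iff)

lemma subseq_map_nth:
  assumes "sorted_wrt (<) is" "\<forall>i \<in> set is. i < length xs"
  shows "subseq (map ((!) xs) is) xs"
  using assms
proof (induction "is" arbitrary: xs rule: rev_induct)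
  case (snoc j js)
  have js: "\<forall>i \<in> set js. i < j" and j: "j < length xs" and "sorted_wrt (<) js"
    using snoc.prems by (auto simp: sorted_wrt_append)
  then have "subseq (map ((!) (take j xs)) js) (take j xs)"
    using snoc.IH by simp
  moreover have "map ((!) (take j xs)) js = map ((!) xs) js"
    using js by simp
  moreover have "drop j xs = xs ! j # drop (Suc j) xs"
    using j by (rule Cons_nth_drop_Suc[symmetric])
  ultimately have "subseq (map ((!) xs) js @ [xs ! j]) (take j xs @ drop j xs)"
    by (intro list_emb_append_mono) auto
  then show ?case
    by simp
qed simp

lemma subseq_obtain_indices:
  assumes "subseq ys xs"
  obtains "is" where "sorted_wrt (<) is" "\<forall>i \<in> set is. i < length xs" "ys = map ((!) xs) is"
  using assms
proof (induction arbitrary: thesis rule: list_emb.induct)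
  case (list_emb_Nil xs)
  show ?case by (rule list_emb_Nil.prems[of "[]"]) auto
next
  case (list_emb_Cons ys xs x)
  show ?case
    by (rule list_emb_Cons.IH)
      (rule list_emb_Cons.prems[of "map Suc _"]; auto simp: sorted_wrt_map comp_def)
next
  case (list_emb_Cons2 y x ys xs)
  show ?case
    by (rule list_emb_Cons2.IH)
      (rule list_emb_Cons2.prems[of "0 # map Suc _"];
        use list_emb_Cons2.hyps in \<open>auto simp: sorted_wrt_map comp_def\<close>)
qed

lemma subseq_map_obtain:
  assumes "subseq ys (map f xs)"
  obtains zs where "subseq zs xs" "ys = map f zs"
  using assms by (metis nths_map subseq_conv_nths)

lemma subseq_append_Cons_cases:
  assumes "subseq ys (a @ M # b)"
  obtains (left) "subseq ys (a @ [M])"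
  | (right) ys1 w ws where "ys = ys1 @ w # ws" "subseq ys1 a" "subseq (w # ws) b"
  | (across) ys1 w ws where "ys = ys1 @ M # w # ws" "subseq ys1 a" "subseq (w # ws) b"
proof -
  obtain ys1 ys2 where split: "ys = ys1 @ ys2" "subseq ys1 a" "subseq ys2 (M # b)"
    using assms by (rule subseq_appendE)
  from split(3) show thesis
  proof (cases rule: subseq_Cons_cases)
    case 1
    show thesis
    proof (cases ys2)
      case Nil
      then show thesis
        using split by (intro left) (simp add: subseq_rev_drop_many)
    next
      case (Cons w ws)
      then show thesis
        using split 1 by (intro right) auto
    qed
  next
    case (2 zs)
    show thesis
    proof (cases zs)
      case Nil
      then show thesis
        using split 2 by (intro left) simp
    next
      case (Cons w ws)
      then show thesis
        using split 2 by (intro across) auto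
    qed
  qed
qed

lemma sorted_wrt_irrefl_distinct: "sorted_wrt R xs \<Longrightarrow> (\<And>x. \<not> R x x) \<Longrightarrow> distinct xs"
  by (induction xs) auto

lemma sorted_wrt_iff_subseq_pairs:
  "sorted_wrt R xs \<longleftrightarrow> (\<forall>x y. subseq [x, y] xs \<longrightarrow> R x y)"
proof (induction xs)
  case (Cons a xs)
  have "subseq [x, y] (a # xs) \<longleftrightarrow> x = a \<and> y \<in> set xs \<or> subseq [x, y] xs" for x y
    by (auto simp: subseq_singleton_left dest: subseq_Cons')
  then show ?case
    using Cons.IH by auto
qed simp

lemma sorted_wrt_butlast_less_last:
  "sorted_wrt (<) ys \<Longrightarrow> x \<in> set (butlast ys) \<Longrightarrow> x < last ys"
  by (induction ys) (auto split: if_splits)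

lemma sorted_subseq_Cons_Max:
  fixes M :: "'a::order"
  assumes "sorted_wrt (<) ys" "subseq ys (M # xs)" "\<forall>y \<in> set xs. y < M"
  shows "ys = [M] \<or> subseq ys xs"
  using assms(2)
proof (cases rule: subseq_Cons_cases)
  case (2 zs)
  show ?thesis
  proof (cases zs)
    case (Cons z zs')
    then have "z \<in> set xs"
      using set_subseq_subset[OF 2(2)] by auto
    moreover have "M < z"
      using assms(1) 2(1) Cons by simp
    ultimately show ?thesis
      using assms(3) by auto
  qed (use 2 in simp)
qed simp

lemma sorted_wrt_map_strict_mono_on:
  fixes f :: "'a::linorder \<Rightarrow> 'b::linorder"
  assumes "strict_mono_on (set xs) f"
  shows "sorted_wrt (<) (map f xs) \<longleftrightarrow> sorted_wrt (<) xs"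
  using assms
proof (induction xs)
  case (Cons x xs)
  then have "strict_mono_on (set xs) f"
    by (auto intro: monotone_on_subset)
  then show ?case
    using Cons.IH strict_mono_on_less[OF Cons.prems] by auto
qed simp

lemma sorted_wrt_greater_set_unique:
  fixes xs ys :: "'a::linorder list"
  assumes "sorted_wrt (>) xs" "sorted_wrt (>) ys" "set xs = set ys"
  shows "xs = ys"
  using assms by (metis distinct_rev sorted_distinct_set_unique set_rev sorted_wrt_rev strict_sorted_iff
      rev_rev_ident)

section \<open>Order isomorphism and pattern containment\<close>

text \<open>Stated on pairs of corresponding entries, so that permuting positions in both lists
  simultaneously is harmless.\<close>

definition order_isomorphic :: "nat list \<Rightarrow> nat list \<Rightarrow> bool" where
  "order_isomorphic xs ys \<longleftrightarrow> length xs = length ys \<and>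
     (\<forall>(x, y) \<in> set (zip xs ys). \<forall>(x', y') \<in> set (zip xs ys). x < x' \<longleftrightarrow> y < y')"

lemma order_isomorphic_iff_nth:
  "order_isomorphic xs ys \<longleftrightarrow> length xs = length ys \<and>
     (\<forall>i < length ys. \<forall>j < length ys. xs ! i < xs ! j \<longleftrightarrow> ys ! i < ys ! j)"
  unfolding order_isomorphic_def set_zip by (auto; metis)

lemma order_isomorphic_swap12:
  "order_isomorphic (x # y # xs) (x' # y' # ys) \<longleftrightarrow> order_isomorphic (y # x # xs) (y' # x' # ys)"
  unfolding order_isomorphic_def by (simp add: insert_commute)

lemma order_isomorphic_map:
  assumes "strict_mono_on (set xs) f"
  shows "order_isomorphic (map f xs) ys \<longleftrightarrow> order_isomorphic xs ys"
  using assms unfolding order_isomorphic_def zip_map1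
  by (fastforce dest: set_zip_leftD simp: strict_mono_on_less)

lemma order_isomorphic_upt_iff_sorted:
  "order_isomorphic xs [1..<length xs + 1] \<longleftrightarrow> sorted_wrt (<) xs"
  unfolding order_isomorphic_iff_nth sorted_wrt_iff_nth_less
  by (auto simp del: upt_Suc) (metis linorder_neqE_nat order_less_asym)

lemma contains_iff_subseq:
  "contains xs tau \<longleftrightarrow> (\<exists>ys. subseq ys xs \<and> order_isomorphic ys tau)"
proof
  assume "contains xs tau"
  then obtain "is" where "length is = length tau" "sorted_wrt (<) is" "\<forall>i \<in> set is. i < length xs"
    "\<forall>a < length tau. \<forall>b < length tau. xs ! (is ! a) < xs ! (is ! b) \<longleftrightarrow> tau ! a < tau ! b"
    unfolding contains_def by blast
  then show "\<exists>ys. subseq ys xs \<and> order_isomorphic ys tau"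
    by (intro exI[of _ "map ((!) xs) is"]) (simp add: subseq_map_nth order_isomorphic_iff_nth)
next
  assume "\<exists>ys. subseq ys xs \<and> order_isomorphic ys tau"
  then obtain ys "is" where "order_isomorphic ys tau" "sorted_wrt (<) is"
    "\<forall>i \<in> set is. i < length xs" "ys = map ((!) xs) is"
    by (metis subseq_obtain_indices)
  then show "contains xs tau"
    unfolding contains_def order_isomorphic_iff_nth by (intro exI[of _ "is"]) auto
qed

lemma contains_map:
  assumes "strict_mono_on (set xs) f"
  shows "contains (map f xs) tau \<longleftrightarrow> contains xs tau"
proof -
  have "order_isomorphic (map f zs) tau \<longleftrightarrow> order_isomorphic zs tau" if "subseq zs xs" for zs
    using assms that
    by (intro order_isomorphic_map) (auto intro: monotone_on_subset dest: list_emb_set)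
  then show ?thesis
    unfolding contains_iff_subseq by (metis subseq_map subseq_map_obtain)
qed

definition has_incr :: "nat \<Rightarrow> nat list \<Rightarrow> bool" where
  "has_incr k xs \<longleftrightarrow> (\<exists>ys. subseq ys xs \<and> length ys = k \<and> sorted_wrt (<) ys)"

fun swapped_sorted :: "nat list \<Rightarrow> bool" where
  "swapped_sorted (x # y # ys) \<longleftrightarrow> sorted_wrt (<) (y # x # ys)"
| "swapped_sorted _ \<longleftrightarrow> False"

definition has_swapped :: "nat \<Rightarrow> nat list \<Rightarrow> bool" where
  "has_swapped k xs \<longleftrightarrow> (\<exists>ys. subseq ys xs \<and> length ys = k \<and> swapped_sorted ys)"

lemma contains_incr_pat: "contains xs (incr_pat k) \<longleftrightarrow> has_incr k xs"
proof -
  have "order_isomorphic ys (incr_pat k) \<longleftrightarrow> length ys = k \<and> sorted_wrt (<) ys" for ys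
    unfolding incr_pat_def using order_isomorphic_upt_iff_sorted[of ys]
    by (auto simp: order_isomorphic_def simp del: upt_Suc)
  then show ?thesis
    unfolding contains_iff_subseq has_incr_def by blast
qed

lemma contains_swap12_pat:
  assumes "2 \<le> k"
  shows "contains xs (swap12_pat k) \<longleftrightarrow> has_swapped k xs"
proof -
  have "order_isomorphic ys (swap12_pat k) \<longleftrightarrow> length ys = k \<and> swapped_sorted ys" for ys
  proof (cases ys rule: swapped_sorted.cases)
    case (1 x y zs)
    have "swap12_pat k = 2 # 1 # [3..<k + 1]" and "incr_pat k = 1 # 2 # [3..<k + 1]"
      using assms
      by (simp_all add: swap12_pat_def incr_pat_def upt_conv_Cons numeral_3_eq_3 del: upt_Suc)
    then have "order_isomorphic ys (swap12_pat k) \<longleftrightarrow> order_isomorphic (y # x # zs) (incr_pat k)"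
      using 1 order_isomorphic_swap12 by simp
    then show ?thesis
      using 1 order_isomorphic_upt_iff_sorted[of "y # x # zs"]
      by (auto simp: order_isomorphic_def incr_pat_def simp del: upt_Suc)
  qed (use assms in \<open>auto simp: order_isomorphic_def swap12_pat_def\<close>)
  then show ?thesis
    unfolding contains_iff_subseq has_swapped_def by blast
qed

lemma has_swapped_map:
  "strict_mono_on (set xs) f \<Longrightarrow> 2 \<le> k \<Longrightarrow> has_swapped k (map f xs) \<longleftrightarrow> has_swapped k xs"
  by (simp add: contains_swap12_pat[symmetric] contains_map)

lemma has_incr_subseq: "subseq xs ys \<Longrightarrow> has_incr k xs \<Longrightarrow> has_incr k ys"
  unfolding has_incr_def using subseq_order.order_trans by blast

lemma has_swapped_subseq: "subseq xs ys \<Longrightarrow> has_swapped k xs \<Longrightarrow> has_swapped k ys"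
  unfolding has_swapped_def using subseq_order.order_trans by blast

lemma has_incr_le:
  assumes "has_incr k xs" "j \<le> k"
  shows "has_incr j xs"
proof -
  obtain ys where "subseq ys xs" "length ys = k" "sorted_wrt (<) ys"
    using assms(1) unfolding has_incr_def by blast
  moreover have "subseq (take j ys) ys"
    by (rule prefix_imp_subseq[OF take_is_prefix])
  ultimately show ?thesis
    unfolding has_incr_def using assms(2)
    by (intro exI[of _ "take j ys"]) (auto intro: subseq_order.order_trans)
qed

lemma swapped_sorted_take: "swapped_sorted ys \<Longrightarrow> 2 \<le> j \<Longrightarrow> swapped_sorted (take j ys)"
  by (cases ys rule: swapped_sorted.cases) (auto simp: take_Cons' dest: in_set_takeD)

lemma has_swapped_le:
  assumes "has_swapped k xs" "2 \<le> j" "j \<le> k"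
  shows "has_swapped j xs"
proof -
  obtain ys where "subseq ys xs" "length ys = k" "swapped_sorted ys"
    using assms(1) unfolding has_swapped_def by blast
  moreover have "subseq (take j ys) ys"
    by (rule prefix_imp_subseq[OF take_is_prefix])
  ultimately show ?thesis
    unfolding has_swapped_def using assms(2,3)
    by (intro exI[of _ "take j ys"]) (auto intro: subseq_order.order_trans swapped_sorted_take)
qed

lemma has_swapped_ge_2: "has_swapped k xs \<Longrightarrow> 2 \<le> k"
  unfolding has_swapped_def by (auto elim: swapped_sorted.elims)

lemma has_incr_2_iff:
  assumes "distinct xs"
  shows "has_incr 2 xs \<longleftrightarrow> \<not> sorted_wrt (>) xs"
proof -
  have "has_incr 2 xs \<longleftrightarrow> (\<exists>x y. subseq [x, y] xs \<and> x < y)"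
    unfolding has_incr_def by (auto simp: length_Suc_conv numeral_eq_Suc) blast
  also have "\<dots> \<longleftrightarrow> (\<exists>x y. subseq [x, y] xs \<and> \<not> y < x)"
    using assms by (fastforce dest: distinct_subseq)
  finally show ?thesis
    by (simp add: sorted_wrt_iff_subseq_pairs)
qed

lemma has_swapped_2_iff:
  assumes "distinct xs"
  shows "has_swapped 2 xs \<longleftrightarrow> \<not> sorted_wrt (<) xs"
proof -
  have "has_swapped 2 xs \<longleftrightarrow> (\<exists>x y. subseq [x, y] xs \<and> y < x)"
    unfolding has_swapped_def by (auto simp: length_Suc_conv numeral_eq_Suc) blast
  also have "\<dots> \<longleftrightarrow> (\<exists>x y. subseq [x, y] xs \<and> \<not> x < y)"
    using assms by (fastforce dest: distinct_subseq)
  finally show ?thesis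
    by (simp add: sorted_wrt_iff_subseq_pairs)
qed

lemma has_incr_decreasing:
  assumes "sorted_wrt (>) xs" "2 \<le> k"
  shows "\<not> has_incr k xs"
proof
  assume "has_incr k xs"
  then have "has_incr 2 xs"
    using assms(2) by (rule has_incr_le)
  moreover have "distinct xs"
    using assms(1) by (rule sorted_wrt_irrefl_distinct) simp
  ultimately show False
    using assms(1) has_incr_2_iff by blast
qed

lemma has_swapped_increasing:
  assumes "sorted_wrt (<) xs"
  shows "\<not> has_swapped k xs"
proof
  assume "has_swapped k xs"
  then have "has_swapped 2 xs"
    using has_swapped_ge_2 has_swapped_le by blast
  moreover have "distinct xs"
    using assms by (rule sorted_wrt_irrefl_distinct) simp
  ultimately show False
    using assms has_swapped_2_iff by blast
qed

lemma swapped_sorted_butlast_less_last: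
  "swapped_sorted ys \<Longrightarrow> 3 \<le> length ys \<Longrightarrow> x \<in> set (butlast ys) \<Longrightarrow> x < last ys"
  by (cases ys rule: swapped_sorted.cases) (auto dest: sorted_wrt_butlast_less_last)

lemma swapped_sorted_snoc:
  "swapped_sorted ys \<Longrightarrow> \<forall>y \<in> set ys. y < M \<Longrightarrow> swapped_sorted (ys @ [M])"
  by (cases ys rule: swapped_sorted.cases) (auto simp: sorted_wrt_append)

lemma has_incr_snoc_Max:
  assumes "\<forall>y \<in> set xs. y < M"
  shows "has_incr (Suc k) (xs @ [M]) \<longleftrightarrow> has_incr k xs"
proof
  assume "has_incr (Suc k) (xs @ [M])"
  then obtain ys where ys: "subseq ys (xs @ [M])" "length ys = Suc k" "sorted_wrt (<) ys"
    unfolding has_incr_def by blast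
  then have "subseq (take k ys) xs"
    using subseq_butlast_snoc[OF ys(1)] by (simp add: butlast_conv_take)
  then show "has_incr k xs"
    unfolding has_incr_def using ys by (intro exI[of _ "take k ys"]) simp
next
  assume "has_incr k xs"
  then obtain ys where "subseq ys xs" "length ys = k" "sorted_wrt (<) ys"
    unfolding has_incr_def by blast
  then show "has_incr (Suc k) (xs @ [M])"
    unfolding has_incr_def using assms
    by (intro exI[of _ "ys @ [M]"]) (auto simp: sorted_wrt_append dest: set_subseq_subset)
qed

lemma has_swapped_snoc_Max:
  assumes "\<forall>y \<in> set xs. y < M" "2 \<le> k"
  shows "has_swapped (Suc k) (xs @ [M]) \<longleftrightarrow> has_swapped k xs"
proof
  assume "has_swapped (Suc k) (xs @ [M])"
  then obtain ys where ys: "subseq ys (xs @ [M])" "length ys = Suc k" "swapped_sorted ys"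
    unfolding has_swapped_def by blast
  then have "subseq (take k ys) xs"
    using subseq_butlast_snoc[OF ys(1)] by (simp add: butlast_conv_take)
  then show "has_swapped k xs"
    unfolding has_swapped_def using ys assms(2)
    by (intro exI[of _ "take k ys"]) (simp add: swapped_sorted_take)
next
  assume "has_swapped k xs"
  then obtain ys where "subseq ys xs" "length ys = k" "swapped_sorted ys"
    unfolding has_swapped_def by blast
  then show "has_swapped (Suc k) (xs @ [M])"
    unfolding has_swapped_def using assms(1)
    by (intro exI[of _ "ys @ [M]"]) (auto intro: swapped_sorted_snoc dest: set_subseq_subset)
qed

lemma has_incr_Cons_Max:
  assumes "\<forall>y \<in> set xs. y < M" "2 \<le> k"
  shows "has_incr k (M # xs) \<longleftrightarrow> has_incr k xs"
proof
  assume "has_incr k (M # xs)"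
  then obtain ys where ys: "subseq ys (M # xs)" "length ys = k" "sorted_wrt (<) ys"
    unfolding has_incr_def by blast
  moreover have "ys \<noteq> [M]"
    using ys(2) assms(2) by auto
  ultimately have "subseq ys xs"
    using sorted_subseq_Cons_Max assms(1) by blast
  then show "has_incr k xs"
    unfolding has_incr_def using ys by blast
qed (rule has_incr_subseq[OF subseq_Cons_self])

lemma has_swapped_Cons_Max:
  assumes "\<forall>y \<in> set xs. y < M" "3 \<le> k"
  shows "has_swapped k (M # xs) \<longleftrightarrow> has_swapped k xs"
proof
  assume "has_swapped k (M # xs)"
  then obtain ys where ys: "subseq ys (M # xs)" "length ys = k" "swapped_sorted ys"
    unfolding has_swapped_def by blast
  have "subseq ys xs"
    using ys(1)
  proof (cases rule: subseq_Cons_cases)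
    case (2 zs)
    then obtain q z zs' where "zs = q # z # zs'"
      using ys(2) assms(2) by (cases zs rule: remdups_adj.cases) auto
    then show ?thesis
      using 2 ys(3) assms(1) set_subseq_subset[OF 2(2)] by auto
  qed
  then show "has_swapped k xs"
    using ys unfolding has_swapped_def by blast
qed (rule has_swapped_subseq[OF subseq_Cons_self])

definition has_schroeder_pattern :: "nat list \<Rightarrow> bool" where
  "has_schroeder_pattern xs \<longleftrightarrow>
     (\<exists>x y c d. subseq [x, y, c, d] xs \<and> x < d \<and> y < d \<and> d < c \<and> x \<noteq> y)"

definition schroeder_list :: "nat list \<Rightarrow> bool" where
  "schroeder_list xs \<longleftrightarrow> distinct xs \<and> \<not> has_schroeder_pattern xs"

lemma has_schroeder_pattern_iff_contains:
  "has_schroeder_pattern xs \<longleftrightarrow> contains xs [1, 2, 4, 3] \<or> contains xs [2, 1, 4, 3]"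
proof -
  have shape: "order_isomorphic ys [1, 2, 4, 3] \<or> order_isomorphic ys [2, 1, 4, 3] \<longleftrightarrow>
      (\<exists>x y c d. ys = [x, y, c, d] \<and> x < d \<and> y < d \<and> d < c \<and> x \<noteq> y)" for ys
  proof (cases "length ys = 4")
    case True
    then obtain x y c d where "ys = [x, y, c, d]"
      by (auto simp: length_Suc_conv numeral_eq_Suc)
    then show ?thesis
      by (auto simp: order_isomorphic_def)
  qed (auto simp: order_isomorphic_def)
  have "contains xs [1, 2, 4, 3] \<or> contains xs [2, 1, 4, 3] \<longleftrightarrow>
      (\<exists>ys. subseq ys xs \<and> (order_isomorphic ys [1, 2, 4, 3] \<or> order_isomorphic ys [2, 1, 4, 3]))"
    unfolding contains_iff_subseq by blast
  also have "\<dots> \<longleftrightarrow> has_schroeder_pattern xs"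
    unfolding shape has_schroeder_pattern_def by blast
  finally show ?thesis ..
qed

lemma schroeder_iff: "pi \<in> schroeder n \<longleftrightarrow> set pi = {1..n} \<and> schroeder_list pi"
  unfolding schroeder_def perms_def avoids_def schroeder_list_def has_schroeder_pattern_iff_contains
  by auto

lemma schroeder_list_subseq: "subseq ys xs \<Longrightarrow> schroeder_list xs \<Longrightarrow> schroeder_list ys"
  unfolding schroeder_list_def has_schroeder_pattern_def
  by (meson distinct_subseq subseq_order.order_trans)

lemma schroeder_list_map:
  "strict_mono_on (set xs) f \<Longrightarrow> schroeder_list (map f xs) \<longleftrightarrow> schroeder_list xs"
  by (simp add: schroeder_list_def has_schroeder_pattern_iff_contains contains_map
      distinct_map strict_mono_on_imp_inj_on)

lemma schroeder_list_increasing: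
  assumes "sorted_wrt (<) xs"
  shows "schroeder_list xs"
proof -
  have "\<not> (subseq [x, y, c, d] xs \<and> d < c)" for x y c d
    using sorted_wrt_subseq[of "[x, y, c, d]" xs "(<)"] assms by auto
  then show ?thesis
    using assms unfolding schroeder_list_def has_schroeder_pattern_def strict_sorted_iff by blast
qed

lemma schroeder_list_Cons_Max:
  assumes "\<forall>y \<in> set xs. y < M" "schroeder_list xs"
  shows "schroeder_list (M # xs)"
proof -
  have "\<not> has_schroeder_pattern (M # xs)"
  proof
    assume "has_schroeder_pattern (M # xs)"
    then obtain x y c d where pat: "subseq [x, y, c, d] (M # xs)" "x < d" "y < d" "d < c" "x \<noteq> y"
      unfolding has_schroeder_pattern_def by blast
    from pat(1) show False
    proof (cases rule: subseq_Cons_cases)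
      case 1
      then show False
        using pat assms(2) unfolding schroeder_list_def has_schroeder_pattern_def by blast
    next
      case (2 zs)
      then have "x = M" "d \<in> set xs"
        using set_subseq_subset[of zs xs] by auto
      then show False
        using pat(2) assms(1) by auto
    qed
  qed
  then show ?thesis
    using assms unfolding schroeder_list_def by auto
qed

lemma schroeder_list_below_unique:
  assumes "schroeder_list (a @ M # b)" "\<forall>z \<in> set b. z < M"
    and "u \<in> set a" "v \<in> set a" "y \<in> set b" "u < y" "v < y"
  shows "u = v"
proof (rule ccontr)
  assume "u \<noteq> v"
  then obtain u' v' where "subseq [u', v'] a" "u' < y" "v' < y" "u' \<noteq> v'"
    using subseq_pair_cases[OF assms(3,4)] assms(6,7) by blast
  moreover have "subseq [M, y] (M # b)"
    using assms(5) by (simp add: subseq_singleton_left)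
  ultimately have "subseq [u', v', M, y] (a @ M # b)"
    using list_emb_append_mono[of _ "[u', v']" a "[M, y]"] by simp
  moreover have "y < M"
    using assms(2,5) by blast
  ultimately show False
    using assms(1) \<open>u' < y\<close> \<open>v' < y\<close> \<open>u' \<noteq> v'\<close>
    unfolding schroeder_list_def has_schroeder_pattern_def by blast
qed

section \<open>Splitting at the maximum\<close>

locale max_pivot_split =
  fixes a b :: "nat list" and M s :: nat
  assumes below_Max: "\<forall>y \<in> set a \<union> set b. y < M"
    and pivot_in: "s \<in> set a"
    and pivot_min: "\<forall>x \<in> set a. s \<le> x"
    and pivot_sep: "\<And>x y. x \<in> set a \<Longrightarrow> y \<in> set b \<Longrightarrow> x < y \<Longrightarrow> x = s"
    and distinct: "distinct (a @ M # b)"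
begin

lemma below_Max_a: "\<forall>y \<in> set a. y < M" and below_Max_b: "\<forall>y \<in> set b. y < M"
  using below_Max by simp_all

lemma subseq_left: "subseq (a @ [M]) (a @ M # b)"
  by (simp add: subseq_append')

lemma subseq_right: "subseq (s # b) (a @ M # b)"
  using list_emb_append_mono[of _ "[s]" a b "M # b"] pivot_in
  by (simp add: subseq_singleton_left list_emb_Cons)

lemma sorted_subseq_split:
  assumes "subseq ys (a @ M # b)" "sorted_wrt (<) ys"
  shows "subseq ys (a @ [M]) \<or> subseq ys (s # b)"
  using assms(1)
proof (cases rule: subseq_append_Cons_cases)
  case (right ys1 w ws)
  have "w \<in> set b"
    using set_subseq_subset[OF right(3)] by simp
  have "set ys1 \<subseteq> {s}"
  proof
    fix x
    assume "x \<in> set ys1"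
    then have "x \<in> set a" "x < w"
      using assms(2) right(1) set_subseq_subset[OF right(2)] by (auto simp: sorted_wrt_append)
    then show "x \<in> {s}"
      using pivot_sep \<open>w \<in> set b\<close> by simp
  qed
  moreover have "sorted_wrt (<) ys1"
    using assms(2) right(1) by (simp add: sorted_wrt_append)
  then have "distinct ys1"
    by (rule sorted_wrt_irrefl_distinct) simp
  ultimately have "subseq ys1 [s]"
    by (rule distinct_subset_singleton_subseq[rotated])
  then show ?thesis
    using right list_emb_append_mono[of _ ys1 "[s]" "w # ws" b] by simp
next
  case (across ys1 w ws)
  then have "M \<in> set (butlast ys)"
    by (simp add: butlast_append)
  then have "M < last ys"
    by (rule sorted_wrt_butlast_less_last[OF assms(2)])
  moreover have "last ys \<in> set b"
    using across(1) set_subseq_subset[OF across(3)] by auto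
  ultimately show ?thesis
    using below_Max_b by auto
qed simp

lemma swapped_sorted_subseq_split:
  assumes "subseq ys (a @ M # b)" "swapped_sorted ys" "3 \<le> length ys"
  shows "subseq ys (a @ [M]) \<or> subseq ys (s # b)"
  using assms(1)
proof (cases rule: subseq_append_Cons_cases)
  case (right ys1 w ws)
  have below_last: "x < last ys" if "x \<in> set (butlast ys)" for x
    using swapped_sorted_butlast_less_last[OF assms(2,3) that] .
  have last_b: "last ys \<in> set b"
    using right(1) set_subseq_subset[OF right(3)] by auto
  show ?thesis
  proof (cases ys1)
    case Nil
    then show ?thesis
      using right by (intro disjI2 list_emb_Cons) simp
  next
    case (Cons p ys1')
    then have "p \<in> set a" "p \<in> set (butlast ys)"
      using right(1,2) set_subseq_subset[OF right(2)] by (auto simp: butlast_append)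
    then have "p = s"
      using pivot_sep below_last last_b by blast
    show ?thesis
    proof (cases ys1')
      case Nil
      then show ?thesis
        using right Cons \<open>p = s\<close> by simp
    next
      case (Cons q ys1'')
      then have "q \<in> set a" "q < p"
        using right(1,2) assms(2) \<open>ys1 = p # ys1'\<close> set_subseq_subset[OF right(2)] by auto
      then show ?thesis
        using \<open>p = s\<close> pivot_min by auto
    qed
  qed
next
  case (across ys1 w ws)
  then have "M < last ys"
    using swapped_sorted_butlast_less_last[OF assms(2,3)] by (simp add: butlast_append)
  moreover have "last ys \<in> set b"
    using across(1) set_subseq_subset[OF across(3)] by auto
  ultimately show ?thesis
    using below_Max_b by auto
qed simp

lemma has_incr_iff: "has_incr k (a @ M # b) \<longleftrightarrow> has_incr k (a @ [M]) \<or> has_incr k (s # b)"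
proof
  assume "has_incr k (a @ M # b)"
  then obtain ys where "subseq ys (a @ M # b)" "length ys = k" "sorted_wrt (<) ys"
    unfolding has_incr_def by blast
  then show "has_incr k (a @ [M]) \<or> has_incr k (s # b)"
    using sorted_subseq_split unfolding has_incr_def by blast
qed (use has_incr_subseq subseq_left subseq_right in blast)

lemma has_swapped_iff:
  assumes "3 \<le> k"
  shows "has_swapped k (a @ M # b) \<longleftrightarrow> has_swapped k (a @ [M]) \<or> has_swapped k (s # b)"
proof
  assume "has_swapped k (a @ M # b)"
  then obtain ys where "subseq ys (a @ M # b)" "length ys = k" "swapped_sorted ys"
    unfolding has_swapped_def by blast
  then show "has_swapped k (a @ [M]) \<or> has_swapped k (s # b)"
    using swapped_sorted_subseq_split assms unfolding has_swapped_def by blast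
qed (use has_swapped_subseq subseq_left subseq_right in blast)

lemma has_schroeder_pattern_split:
  assumes "has_schroeder_pattern (a @ M # b)"
  shows "has_schroeder_pattern a \<or> has_schroeder_pattern (s # b)"
proof -
  obtain x y c d where pat: "subseq [x, y, c, d] (a @ M # b)" "x < d" "y < d" "d < c" "x \<noteq> y"
    using assms unfolding has_schroeder_pattern_def by blast
  then have pattern: "has_schroeder_pattern zs" if "subseq [x, y, c, d] zs" for zs
    using that unfolding has_schroeder_pattern_def by blast
  obtain ys1 ys2 where split: "[x, y, c, d] = ys1 @ ys2" "subseq ys1 a" "subseq ys2 (M # b)"
    using pat(1) by (rule subseq_appendE)
  have "c \<in> set (a @ M # b)"
    using set_subseq_subset[OF pat(1)] by simp
  then have "c \<le> M"
    using below_Max_a below_Max_b by (cases "c = M") auto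
  then have not_M: "x \<noteq> M" "y \<noteq> M" "d \<noteq> M"
    using pat(2-4) by auto
  have below_pivot: "z = s" if "z \<in> set ys1" "d \<in> set ys2" "z < d" for z
    using that pivot_sep set_subseq_subset[OF split(2)] set_subseq_subset[OF split(3)] not_M(3)
    by auto
  have ys: "ys1 = take (length ys1) [x, y, c, d]" "ys2 = drop (length ys1) [x, y, c, d]"
    using split(1) by (metis append_eq_conv_conj)+
  have "length ys1 \<le> 4"
    using arg_cong[OF split(1), of length] by simp
  then consider "length ys1 = 0" | "length ys1 = 1" | "length ys1 = 2 \<or> length ys1 = 3"
    | "length ys1 = 4"
    by linarith
  then show ?thesis
  proof cases
    case 1
    then have "subseq [x, y, c, d] b"
      using ys split(3) not_M by simp
    then show ?thesis
      using pattern subseq_Cons_self subseq_order.order_trans by blast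
  next
    case 2
    then have "subseq [y, c, d] b" "x = s"
      using ys split(3) not_M below_pivot pat(2) by (simp_all add: numeral_eq_Suc)
    then show ?thesis
      using pattern by simp
  next
    case 3
    then have "x = s" "y = s"
      using ys below_pivot pat(2,3) by (auto simp: numeral_eq_Suc)
    then show ?thesis
      using pat(5) by simp
  next
    case 4
    then show ?thesis
      using ys split(2) pattern by simp
  qed
qed

lemma schroeder_list_iff:
  "schroeder_list (a @ M # b) \<longleftrightarrow> schroeder_list a \<and> schroeder_list (s # b)"
  using schroeder_list_subseq[OF subseq_right] schroeder_list_subseq[OF subseq_rev_drop_many[of a a]]
    has_schroeder_pattern_split distinct
  unfolding schroeder_list_def by blast

end

lemma max_pivot_split_Min:
  assumes "schroeder_list (a @ M # b)" "\<forall>y \<in> set a \<union> set b. y < M" "a \<noteq> []"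
  shows "max_pivot_split a b M (Min (set a))"
proof
  show "\<forall>y \<in> set a \<union> set b. y < M" "Min (set a) \<in> set a" "\<forall>x \<in> set a. Min (set a) \<le> x"
    using assms(2,3) by simp_all
  show "distinct (a @ M # b)"
    using assms(1) unfolding schroeder_list_def by blast
next
  fix x y
  assume x: "x \<in> set a" and y: "y \<in> set b" and "x < y"
  have "Min (set a) < y"
    using Min_le[OF List.finite_set x] \<open>x < y\<close> by linarith
  then show "x = Min (set a)"
    using schroeder_list_below_unique[OF assms(1) _ x Min_in y \<open>x < y\<close>] assms(2,3) by simp
qed

section \<open>The map \<open>omega\<close>\<close>

lemma Max_set_append_Cons:
  fixes M :: "'a::linorder"
  assumes "\<forall>y \<in> set a \<union> set b. y < M"
  shows "Max (set (a @ M # b)) = M"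
  using assms by (intro Max_eqI) (auto simp: less_imp_le)

lemma split_at_Max:
  assumes "xs \<noteq> []"
  shows "xs = takeWhile (\<lambda>x. x \<noteq> Max (set xs)) xs @
    Max (set xs) # tl (dropWhile (\<lambda>x. x \<noteq> Max (set xs)) xs)"
proof -
  have "dropWhile (\<lambda>x. x \<noteq> Max (set xs)) xs \<noteq> []"
    using assms by (simp add: dropWhile_eq_Nil_conv)
  then show ?thesis
    using hd_dropWhile[of "\<lambda>x. x \<noteq> Max (set xs)" xs] takeWhile_dropWhile_id
    by (metis (no_types) list.collapse)
qed

lemma length_split_at_Max:
  assumes "\<not> sorted_wrt R xs"
  shows "length xs = length (takeWhile (\<lambda>x. x \<noteq> Max (set xs)) xs)
    + Suc (length (tl (dropWhile (\<lambda>x. x \<noteq> Max (set xs)) xs)))"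
proof -
  have "xs \<noteq> []"
    using assms by auto
  then show ?thesis
    using arg_cong[OF split_at_Max, of xs length] by simp
qed

definition glue :: "nat list \<Rightarrow> nat \<Rightarrow> nat list \<Rightarrow> nat \<Rightarrow> nat list" where
  "glue a' M c' s = map (\<lambda>x. if x = s then hd c' else x) a' @ M # tl c'"

function omega :: "nat list \<Rightarrow> nat list" where
  "omega xs =
     (if sorted_wrt (>) xs then sort xs
      else
        let M = Max (set xs); a = takeWhile (\<lambda>x. x \<noteq> M) xs; b = tl (dropWhile (\<lambda>x. x \<noteq> M) xs) in
        if b = [] \<and> sorted_wrt (>) a then M # sort a
        else if a = [] then M # omega b
        else glue (omega a) M (omega (Min (set a) # b)) (Min (set a)))"
  by pat_completeness auto

termination
  by (relation "measure length") (auto dest: length_split_at_Max)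

declare omega.simps [simp del]

lemma omega_split_Max:
  assumes "distinct xs" "\<not> sorted_wrt (>) xs"
  obtains a M b where "xs = a @ M # b" "\<forall>y \<in> set a \<union> set b. y < M"
    "omega xs = (if b = [] \<and> sorted_wrt (>) a then M # sort a
      else if a = [] then M # omega b else glue (omega a) M (omega (Min (set a) # b)) (Min (set a)))"
proof -
  have "xs \<noteq> []"
    using assms(2) by auto
  define M where "M = Max (set xs)"
  define a where "a = takeWhile (\<lambda>x. x \<noteq> M) xs"
  define b where "b = tl (dropWhile (\<lambda>x. x \<noteq> M) xs)"
  have xs: "xs = a @ M # b"
    using split_at_Max[OF \<open>xs \<noteq> []\<close>] unfolding M_def a_def b_def .
  moreover have "\<forall>y \<in> set a \<union> set b. y < M"
  proof
    fix y
    assume "y \<in> set a \<union> set b"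
    then have "y \<in> set xs" "y \<noteq> M"
      using assms(1) xs by auto
    then show "y < M"
      unfolding M_def by (simp add: order.not_eq_order_implies_strict)
  qed
  moreover have "omega xs = (if b = [] \<and> sorted_wrt (>) a then M # sort a
      else if a = [] then M # omega b else glue (omega a) M (omega (Min (set a) # b)) (Min (set a)))"
    using assms(2) by (subst omega.simps) (simp add: Let_def M_def a_def b_def)
  ultimately show thesis
    using that by blast
qed

lemma omega_cases [case_names decreasing snoc_Max Cons_Max glue]:
  assumes "distinct xs"
  obtains (decreasing) "sorted_wrt (>) xs" "omega xs = sort xs"
  | (snoc_Max) a M where "xs = a @ [M]" "a \<noteq> []" "sorted_wrt (>) a" "\<forall>y \<in> set a. y < M"
      "omega xs = M # sort a"
  | (Cons_Max) M b where "xs = M # b" "\<not> sorted_wrt (>) b" "\<forall>y \<in> set b. y < M"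
      "omega xs = M # omega b"
  | (glue) a M b where "xs = a @ M # b" "a \<noteq> []" "b \<noteq> [] \<or> \<not> sorted_wrt (>) a"
      "\<forall>y \<in> set a \<union> set b. y < M"
      "omega xs = glue (omega a) M (omega (Min (set a) # b)) (Min (set a))"
proof (cases "sorted_wrt (>) xs")
  case True
  then show thesis
    using decreasing by (simp add: omega.simps)
next
  case not_decreasing: False
  then obtain a M b where xs: "xs = a @ M # b" and below: "\<forall>y \<in> set a \<union> set b. y < M"
    and omega_xs: "omega xs = (if b = [] \<and> sorted_wrt (>) a then M # sort a
      else if a = [] then M # omega b else glue (omega a) M (omega (Min (set a) # b)) (Min (set a)))"
    using omega_split_Max[OF assms] by blast
  consider "b = [] \<and> sorted_wrt (>) a" | "\<not> (b = [] \<and> sorted_wrt (>) a)" "a = []"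
    | "\<not> (b = [] \<and> sorted_wrt (>) a)" "a \<noteq> []"
    by blast
  then show thesis
  proof cases
    case 1
    moreover have "a \<noteq> []"
      using not_decreasing xs 1 by (cases a) auto
    ultimately show thesis
      using snoc_Max[of a M] xs below omega_xs by auto
  next
    case 2
    then show thesis
      using Cons_Max[of M b] not_decreasing xs below omega_xs by auto
  next
    case 3
    then show thesis
      using glue[of a M b] xs below omega_xs by auto
  qed
qed

text \<open>The sortedness clause is the case \<open>k = 2\<close> of
  the last one (see \<open>corresponds_has_incr_iff\<close>), which is needed when a pattern is extended
  by the maximum.\<close>

definition corresponds :: "nat list \<Rightarrow> nat list \<Rightarrow> bool" where
  "corresponds xs R \<longleftrightarrow> set R = set xs \<and> length R = length xs \<and> schroeder_list R \<and>
     (sorted_wrt (<) R \<longleftrightarrow> sorted_wrt (>) xs) \<and> (\<forall>k \<ge> 3. has_incr k xs \<longleftrightarrow> has_swapped k R)"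

lemma corresponds_distinct: "corresponds xs R \<Longrightarrow> distinct xs"
  unfolding corresponds_def schroeder_list_def by (metis card_distinct distinct_card)

lemma corresponds_has_incr_iff:
  assumes "corresponds xs R" "2 \<le> k"
  shows "has_incr k xs \<longleftrightarrow> has_swapped k R"
proof (cases "k = 2")
  case True
  have "distinct xs" "distinct R"
    using assms(1) corresponds_distinct unfolding corresponds_def schroeder_list_def by auto
  then show ?thesis
    using True assms(1) has_incr_2_iff has_swapped_2_iff unfolding corresponds_def by simp
next
  case False
  then show ?thesis
    using assms unfolding corresponds_def by simp
qed

lemma corresponds_decreasing:
  assumes "sorted_wrt (>) xs"
  shows "corresponds xs (sort xs)"
proof -
  have "distinct xs"
    using assms by (rule sorted_wrt_irrefl_distinct) simp
  then have "sorted_wrt (<) (sort xs)"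
    by (simp add: strict_sorted_iff)
  then show ?thesis
    unfolding corresponds_def
    using assms has_incr_decreasing has_swapped_increasing schroeder_list_increasing by simp
qed

lemma corresponds_snoc_Max:
  assumes "a \<noteq> []" "sorted_wrt (>) a" "\<forall>y \<in> set a. y < M"
  shows "corresponds (a @ [M]) (M # sort a)"
proof -
  have "distinct a"
    using assms(2) by (rule sorted_wrt_irrefl_distinct) simp
  then have increasing: "sorted_wrt (<) (sort a)"
    by (simp add: strict_sorted_iff)
  have "schroeder_list (M # sort a)"
    using schroeder_list_Cons_Max schroeder_list_increasing[OF increasing] assms(3) by simp
  moreover obtain z where "z \<in> set a"
    using assms(1) by fastforce
  then have "\<not> sorted_wrt (<) (M # sort a)" "\<not> sorted_wrt (>) (a @ [M])"
    using assms(3) by (fastforce simp: sorted_wrt_append)+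
  moreover have "has_incr k (a @ [M]) \<longleftrightarrow> has_swapped k (M # sort a)" if "3 \<le> k" for k
  proof -
    have "has_incr k (a @ [M]) \<longleftrightarrow> has_incr (k - 1) a"
      using has_incr_snoc_Max[OF assms(3), of "k - 1"] that by simp
    then show ?thesis
      using has_incr_decreasing[OF assms(2), of "k - 1"] has_swapped_Cons_Max[of "sort a" M k]
        has_swapped_increasing[OF increasing] assms(3) that
      by simp
  qed
  ultimately show ?thesis
    unfolding corresponds_def by simp
qed

lemma corresponds_Cons_Max:
  assumes "corresponds b R" "\<not> sorted_wrt (>) b" "\<forall>y \<in> set b. y < M"
  shows "corresponds (M # b) (M # R)"
proof -
  have R: "set R = set b" "length R = length b" "schroeder_list R" "\<not> sorted_wrt (<) R"
    and stats: "\<forall>k \<ge> 3. has_incr k b \<longleftrightarrow> has_swapped k R"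
    using assms(1,2) unfolding corresponds_def by auto
  have below: "\<forall>y \<in> set R. y < M"
    using R(1) assms(3) by simp
  have "has_incr k (M # b) \<longleftrightarrow> has_swapped k (M # R)" if "3 \<le> k" for k
    using has_incr_Cons_Max[OF assms(3)] has_swapped_Cons_Max[OF below] stats that by simp
  then show ?thesis
    using R schroeder_list_Cons_Max[OF below R(3)] assms(2) unfolding corresponds_def by simp
qed

locale glue_images = max_pivot_split +
  fixes a' c' :: "nat list"
  assumes corresponds_a: "corresponds a a'" and corresponds_c: "corresponds (s # b) c'"
begin

abbreviation relabel :: "nat \<Rightarrow> nat" where
  "relabel x \<equiv> if x = s then hd c' else x"

lemma set_a': "set a' = set a" and distinct_a': "distinct a'" and length_a': "length a' = length a"
  and set_c': "set c' = insert s (set b)" and distinct_c': "distinct c'"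
  and length_c': "length c' = Suc (length b)"
  using corresponds_a corresponds_c unfolding corresponds_def schroeder_list_def by auto

lemma c'_eq: "c' = hd c' # tl c'"
  using set_c' by (cases c') auto

lemma glue_eq: "glue a' M c' s = map relabel a' @ M # tl c'"
  unfolding glue_def ..

lemma hd_c'_less:
  assumes "z \<in> set a" "z \<noteq> s"
  shows "hd c' < z"
proof (cases "hd c' = s")
  case True
  have "s \<le> z"
    using pivot_min assms(1) by blast
  then show ?thesis
    using True assms(2) by simp
next
  case False
  then have "hd c' \<in> set b"
    using set_c' c'_eq by (metis insert_iff list.set_intros(1))
  then have "hd c' \<noteq> z" "\<not> z < hd c'"
    using distinct assms pivot_sep[OF assms(1)] by auto
  then show ?thesis
    by simp
qed

lemma relabel_strict_mono: "strict_mono_on (set a') relabel"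
proof (rule strict_mono_onI)
  fix x y
  assume "x \<in> set a'" "y \<in> set a'" "x < y"
  moreover have "s \<le> x"
    using pivot_min \<open>x \<in> set a'\<close> set_a' by blast
  then have "y \<noteq> s"
    using \<open>x < y\<close> by simp
  ultimately show "relabel x < relabel y"
    using hd_c'_less set_a' by auto
qed

lemma set_relabel: "set (map relabel a') = insert (hd c') (set a - {s})"
  using set_a' pivot_in by (auto simp: image_iff)

lemma set_tl_c': "set (tl c') = insert s (set b) - {hd c'}"
  using set_c' distinct_c' c'_eq by (metis Diff_insert_absorb distinct.simps(2) list.simps(15))

lemma below_Max_glue: "\<forall>y \<in> set (map relabel a') \<union> set (tl c'). y < M"
proof -
  have "hd c' \<in> insert s (set b)"
    using set_c' c'_eq by (metis list.set_intros(1))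
  then have "set (map relabel a') \<union> set (tl c') \<subseteq> set a \<union> set b"
    unfolding set_relabel set_tl_c' using pivot_in by auto
  then show ?thesis
    using below_Max by blast
qed

sublocale image: max_pivot_split "map relabel a'" "tl c'" M "hd c'"
proof
  show "\<forall>y \<in> set (map relabel a') \<union> set (tl c'). y < M"
    by (rule below_Max_glue)
  show "hd c' \<in> set (map relabel a')" "\<forall>x \<in> set (map relabel a'). hd c' \<le> x"
    using hd_c'_less unfolding set_relabel by (auto simp: less_imp_le)
  have "set (map relabel a') \<inter> set (tl c') = {}"
    using distinct unfolding set_relabel set_tl_c' by auto
  then show "distinct (map relabel a' @ M # tl c')"
    using relabel_strict_mono distinct_a' distinct_c' c'_eq below_Max_glue
    by (auto simp: distinct_map strict_mono_on_imp_inj_on distinct_tl)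
next
  fix x y
  assume x: "x \<in> set (map relabel a')" and y: "y \<in> set (tl c')" and "x < y"
  show "x = hd c'"
  proof (rule ccontr)
    assume "x \<noteq> hd c'"
    then have "x \<in> set a" "x \<noteq> s"
      using x unfolding set_relabel by auto
    moreover have "s \<le> x"
      using pivot_min \<open>x \<in> set a\<close> by blast
    ultimately have "y \<in> set b"
      using y \<open>x < y\<close> unfolding set_tl_c' by auto
    then show False
      using pivot_sep[OF \<open>x \<in> set a\<close> _ \<open>x < y\<close>] \<open>x \<noteq> s\<close> by simp
  qed
qed

lemma has_incr_iff_has_swapped_glue:
  assumes "3 \<le> k"
  shows "has_incr k (a @ M # b) \<longleftrightarrow> has_swapped k (glue a' M c' s)"
proof -
  have "has_incr k (a @ [M]) \<longleftrightarrow> has_incr (k - 1) a"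
    using has_incr_snoc_Max[OF below_Max_a, of "k - 1"] assms by simp
  also have "\<dots> \<longleftrightarrow> has_swapped (k - 1) a'"
    using corresponds_has_incr_iff[OF corresponds_a] assms by simp
  also have "\<dots> \<longleftrightarrow> has_swapped (k - 1) (map relabel a')"
    using has_swapped_map[OF relabel_strict_mono] assms by simp
  also have "\<dots> \<longleftrightarrow> has_swapped k (map relabel a' @ [M])"
    using has_swapped_snoc_Max[OF image.below_Max_a, of "k - 1"] assms by simp
  finally have "has_incr k (a @ [M]) \<longleftrightarrow> has_swapped k (map relabel a' @ [M])" .
  moreover have "has_incr k (s # b) \<longleftrightarrow> has_swapped k c'"
    using corresponds_c assms unfolding corresponds_def by simp
  ultimately show ?thesis
    using has_incr_iff image.has_swapped_iff[OF assms] c'_eq unfolding glue_eq by simp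
qed

lemma set_glue: "set (glue a' M c' s) = set (a @ M # b)"
proof -
  have "set c' = insert (hd c') (set (tl c'))"
    using c'_eq by (metis list.simps(15))
  then show ?thesis
    using set_a' set_c' pivot_in unfolding glue_def by auto
qed

lemma glue_not_increasing:
  assumes "b \<noteq> [] \<or> \<not> sorted_wrt (>) a"
  shows "\<not> sorted_wrt (<) (glue a' M c' s)"
proof
  assume sorted: "sorted_wrt (<) (glue a' M c' s)"
  then have "\<forall>x \<in> set (tl c'). M < x \<and> x < M"
    using image.below_Max_b unfolding glue_eq by (simp add: sorted_wrt_append)
  then have "tl c' = []"
    by (metis less_asym list.set_sel(1))
  then have "b = []"
    using length_c' by (metis length_tl diff_Suc_1 length_0_conv list.size(3))
  moreover have "sorted_wrt (<) a'"
    using sorted sorted_wrt_map_strict_mono_on[OF relabel_strict_mono] unfolding glue_eq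
    by (simp add: sorted_wrt_append)
  ultimately show False
    using assms corresponds_a unfolding corresponds_def by simp
qed

lemma corresponds_glue:
  assumes "b \<noteq> [] \<or> \<not> sorted_wrt (>) a"
  shows "corresponds (a @ M # b) (glue a' M c' s)"
proof -
  have "schroeder_list (map relabel a')"
    using corresponds_a schroeder_list_map[OF relabel_strict_mono] unfolding corresponds_def by simp
  moreover have "schroeder_list (hd c' # tl c')"
    using corresponds_c c'_eq unfolding corresponds_def by simp
  ultimately have "schroeder_list (glue a' M c' s)"
    using image.schroeder_list_iff unfolding glue_eq by simp
  moreover have "\<not> sorted_wrt (>) (a @ M # b)"
  proof
    assume "sorted_wrt (>) (a @ M # b)"
    then have "M < s"
      using pivot_in by (simp add: sorted_wrt_append)
    then show False
      using pivot_in below_Max_a by auto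
  qed
  moreover have "length (glue a' M c' s) = length (a @ M # b)"
    using length_a' length_c' unfolding glue_eq by simp
  ultimately show ?thesis
    unfolding corresponds_def
    using set_glue glue_not_increasing[OF assms] has_incr_iff_has_swapped_glue by simp
qed

lemma hd_glue: "hd (glue a' M c' s) \<noteq> M"
proof -
  have "map relabel a' \<noteq> []"
    using image.pivot_in by auto
  then show ?thesis
    using image.below_Max_a unfolding glue_eq by (cases "map relabel a'") auto
qed

end

lemma corresponds_omega: "schroeder_list xs \<Longrightarrow> corresponds xs (omega xs)"
proof (induction "length xs" arbitrary: xs rule: less_induct)
  case less
  then have "distinct xs"
    unfolding schroeder_list_def by simp
  then show ?case
  proof (cases rule: omega_cases)
    case decreasing
    then show ?thesis
      using corresponds_decreasing by simp
  next
    case (snoc_Max a M)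
    then show ?thesis
      using corresponds_snoc_Max by simp
  next
    case (Cons_Max M b)
    have "schroeder_list b"
      using less.prems Cons_Max(1) schroeder_list_subseq[OF subseq_Cons_self] by simp
    then have "corresponds b (omega b)"
      using less.hyps Cons_Max(1) by simp
    then show ?thesis
      using Cons_Max corresponds_Cons_Max by simp
  next
    case (glue a M b)
    define s where "s = Min (set a)"
    interpret max_pivot_split a b M s
      unfolding s_def using max_pivot_split_Min less.prems glue by simp
    have "schroeder_list a" "schroeder_list (s # b)"
      using schroeder_list_iff less.prems glue(1) by simp_all
    moreover have "length a < length xs" "length (s # b) < length xs"
      using glue(1,2) by auto
    ultimately have "corresponds a (omega a)" "corresponds (s # b) (omega (s # b))"
      using less.hyps by simp_all
    then interpret glue_images a b M s "omega a" "omega (s # b)"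
      by unfold_locales
    show ?thesis
      using corresponds_glue glue s_def by simp
  qed
qed

section \<open>Injectivity of \<open>omega\<close>\<close>

lemma glue_eq_glue:
  assumes "glue_images a1 b1 M s1 a1' c1'" "glue_images a2 b2 M s2 a2' c2'"
    and "glue a1' M c1' s1 = glue a2' M c2' s2"
  shows "c1' = c2'"
    and "map (\<lambda>x. if x = s1 then hd c1' else x) a1' = map (\<lambda>x. if x = s2 then hd c2' else x) a2'"
proof -
  interpret g1: glue_images a1 b1 M s1 a1' c1'
    by fact
  interpret g2: glue_images a2 b2 M s2 a2' c2'
    by fact
  have "M \<notin> set (map g1.relabel a1')" "M \<notin> set (tl c1')"
    using g1.image.below_Max_a g1.image.below_Max_b by auto
  then have images: "map g1.relabel a1' = map g2.relabel a2'" and tails: "tl c1' = tl c2'"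
    using assms(3) unfolding g1.glue_eq g2.glue_eq by (simp_all add: append_Cons_eq_iff)
  then show "map g1.relabel a1' = map g2.relabel a2'"
    by simp
  have "hd c1' \<le> hd c2'" "hd c2' \<le> hd c1'"
    using g1.image.pivot_in g1.image.pivot_min g2.image.pivot_in g2.image.pivot_min
    unfolding images by blast+
  then show "c1' = c2'"
    using g1.c'_eq g2.c'_eq tails by (metis antisym)
qed

lemma omega_nondecreasing_cases [case_names snoc_Max Cons_Max glue]:
  assumes "schroeder_list xs" "\<not> sorted_wrt (>) xs" "M = Max (set xs)"
  obtains (snoc_Max) a where "xs = a @ [M]" "sorted_wrt (>) a" "omega xs = M # sort a"
      "sorted_wrt (<) (sort a)"
  | (Cons_Max) b where "xs = M # b" "omega xs = M # omega b" "\<not> sorted_wrt (<) (omega b)"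
  | (glue) a b where "xs = a @ M # b"
      "glue_images a b M (Min (set a)) (omega a) (omega (Min (set a) # b))"
      "omega xs = glue (omega a) M (omega (Min (set a) # b)) (Min (set a))" "hd (omega xs) \<noteq> M"
proof -
  have "distinct xs"
    using assms(1) unfolding schroeder_list_def by simp
  then show thesis
  proof (cases rule: omega_cases)
    case decreasing
    then show thesis
      using assms(2) by simp
  next
    case (snoc_Max a M')
    moreover have "distinct a"
      using snoc_Max(3) by (rule sorted_wrt_irrefl_distinct) simp
    ultimately show thesis
      using that(1)[of a] Max_set_append_Cons[of a "[]" M'] assms(3) by (simp add: strict_sorted_iff)
  next
    case (Cons_Max M' b)
    have "schroeder_list b"
      using assms(1) Cons_Max(1) schroeder_list_subseq[OF subseq_Cons_self] by simp
    then have "\<not> sorted_wrt (<) (omega b)"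
      using corresponds_omega Cons_Max(2) unfolding corresponds_def by simp
    then show thesis
      using that(2)[of b] Cons_Max Max_set_append_Cons[of "[]" b M'] assms(3) by simp
  next
    case (glue a M' b)
    define s where "s = Min (set a)"
    interpret max_pivot_split a b M' s
      unfolding s_def using max_pivot_split_Min assms(1) glue by simp
    interpret glue_images a b M' s "omega a" "omega (s # b)"
      using corresponds_omega schroeder_list_iff assms(1) glue(1) by unfold_locales simp_all
    have "M' = M"
      using Max_set_append_Cons[OF glue(4)] glue(1) assms(3) by simp
    then show thesis
      using that(3)[of a b] glue glue_images_axioms hd_glue unfolding s_def by simp
  qed
qed

lemma glue_omega_inj:
  assumes g1: "glue_images a1 b1 M s1 (omega a1) (omega (s1 # b1))"
    and g2: "glue_images a2 b2 M s2 (omega a2) (omega (s2 # b2))"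
    and sch: "schroeder_list (a1 @ M # b1)" "schroeder_list (a2 @ M # b2)"
    and set_eq: "set (a1 @ M # b1) = set (a2 @ M # b2)"
    and eq: "glue (omega a1) M (omega (s1 # b1)) s1 = glue (omega a2) M (omega (s2 # b2)) s2"
    and IH: "\<And>u v. length u < length (a1 @ M # b1) \<Longrightarrow> schroeder_list u \<Longrightarrow>
      schroeder_list v \<Longrightarrow> set u = set v \<Longrightarrow> omega u = omega v \<Longrightarrow> u = v"
  shows "a1 = a2 \<and> b1 = b2"
proof -
  interpret g1: glue_images a1 b1 M s1 "omega a1" "omega (s1 # b1)"
    by (fact g1)
  interpret g2: glue_images a2 b2 M s2 "omega a2" "omega (s2 # b2)"
    by (fact g2)
  note same = glue_eq_glue[OF g1 g2 eq]
  have sch_parts: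
    "schroeder_list a1" "schroeder_list (s1 # b1)" "schroeder_list a2" "schroeder_list (s2 # b2)"
    using sch g1.schroeder_list_iff g2.schroeder_list_iff by simp_all
  have "a1 \<noteq> []"
    using g1.pivot_in by auto
  then have shorter: "length a1 < length (a1 @ M # b1)" "length (s1 # b1) < length (a1 @ M # b1)"
    by simp_all
  have set_c: "set (s1 # b1) = set (s2 # b2)"
    using g1.set_c' g2.set_c' same(1) by simp
  have "s1 # b1 = s2 # b2"
    by (rule IH) (use shorter sch_parts set_c same(1) in simp_all)
  then have s: "s1 = s2" and b: "b1 = b2"
    by simp_all
  have "set a1 = set (a1 @ M # b1) - insert M (set b1)"
    using g1.distinct by auto
  also have "\<dots> = set (a2 @ M # b2) - insert M (set b2)"
    by (subst set_eq) (simp only: b)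
  also have "\<dots> = set a2"
    using g2.distinct by auto
  finally have set_a: "set a1 = set a2" .
  have relabel_inj: "inj_on g1.relabel (set (omega a1) \<union> set (omega a2))"
    using strict_mono_on_imp_inj_on[OF g1.relabel_strict_mono] g1.set_a' g2.set_a' set_a by simp
  have "g1.relabel = g2.relabel"
    using s same(1) by (simp cong: if_cong)
  then have "map g1.relabel (omega a1) = map g1.relabel (omega a2)"
    using same(2) by simp
  then have omega_a: "omega a1 = omega a2"
    using inj_on_map_eq_map[OF relabel_inj] by simp
  have "a1 = a2"
    by (rule IH) (simp_all add: shorter sch_parts set_a omega_a)
  then show ?thesis
    using b by simp
qed

lemma omega_inj:
  assumes "schroeder_list xs" "schroeder_list ys" "set xs = set ys" "omega xs = omega ys"
  shows "xs = ys"
  using assms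
proof (induction "length xs" arbitrary: xs ys rule: less_induct)
  case less
  have "corresponds xs (omega xs)" "corresponds ys (omega ys)"
    using corresponds_omega less.prems(1,2) by simp_all
  then have decreasing_iff: "sorted_wrt (>) xs \<longleftrightarrow> sorted_wrt (>) ys"
    using less.prems(4) unfolding corresponds_def by metis
  show ?case
  proof (cases "sorted_wrt (>) xs")
    case True
    then show ?thesis
      using sorted_wrt_greater_set_unique less.prems(3) decreasing_iff by blast
  next
    case False
    define M where "M = Max (set xs)"
    have ys_cases: "schroeder_list ys" "\<not> sorted_wrt (>) ys" "M = Max (set ys)"
      using less.prems(2,3) False decreasing_iff M_def by simp_all
    note omega_eq = less.prems(4)
    from less.prems(1) False M_def show ?thesis
    proof (cases rule: omega_nondecreasing_cases)
      case xs: (snoc_Max a1)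
      have ys_shape: "hd (omega ys) = M" "sorted_wrt (<) (tl (omega ys))"
        using xs(3,4) omega_eq[symmetric] by simp_all
      from ys_cases show ?thesis
      proof (cases rule: omega_nondecreasing_cases)
        case ys: (snoc_Max a2)
        have "set a1 = set a2"
          using xs(3) ys(3) omega_eq by (metis list.inject set_sort)
        then show ?thesis
          using xs(1,2) ys(1,2) sorted_wrt_greater_set_unique by simp
      qed (use ys_shape in simp_all)
    next
      case xs: (Cons_Max b1)
      have ys_shape: "hd (omega ys) = M" "\<not> sorted_wrt (<) (tl (omega ys))"
        using xs(2,3) omega_eq[symmetric] by simp_all
      from ys_cases show ?thesis
      proof (cases rule: omega_nondecreasing_cases)
        case ys: (Cons_Max b2)
        have "b1 = b2"
        proof (rule less.hyps)
          show "length b1 < length xs"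
            using xs(1) by simp
          show "schroeder_list b1" "schroeder_list b2"
            using less.prems(1,2) xs(1) ys(1) by (metis schroeder_list_subseq subseq_Cons_self)+
          have "set b1 = set xs - {M}" "set b2 = set ys - {M}"
            using xs(1) ys(1) less.prems(1,2) unfolding schroeder_list_def by auto
          then show "set b1 = set b2"
            using less.prems(3) by simp
          show "omega b1 = omega b2"
            using xs(2) ys(2) omega_eq by simp
        qed
        then show ?thesis
          using xs(1) ys(1) by simp
      qed (use ys_shape in simp_all)
    next
      case xs: (glue a1 b1)
      have ys_shape: "hd (omega ys) \<noteq> M"
        using xs(4) omega_eq[symmetric] by simp
      from ys_cases show ?thesis
      proof (cases rule: omega_nondecreasing_cases)
        case ys: (glue a2 b2)
        have "a1 = a2 \<and> b1 = b2"
          by (rule glue_omega_inj[OF xs(2) ys(2)])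
            (use less.prems xs(1,3) ys(1,3) less.hyps in simp_all)
        then show ?thesis
          using xs(1) ys(1) by simp
      qed (use ys_shape in simp_all)
    qed
  qed
qed

lemma finite_schroeder: "finite (schroeder n)"
proof (rule finite_subset)
  show "schroeder n \<subseteq> {xs. set xs \<subseteq> {1..n} \<and> length xs \<le> n}"
    unfolding schroeder_def perms_def by (auto dest: distinct_card)
qed (simp add: finite_lists_length_le)

lemma omega_schroeder: "pi \<in> schroeder n \<Longrightarrow> omega pi \<in> schroeder n"
  using corresponds_omega unfolding schroeder_iff corresponds_def by simp

lemma bij_betw_omega: "bij_betw omega (schroeder n) (schroeder n)"
proof -
  have "inj_on omega (schroeder n)"
    by (rule inj_onI) (use omega_inj in \<open>auto simp: schroeder_iff\<close>)
  moreover have "omega ` schroeder n \<subseteq> schroeder n"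
    using omega_schroeder by blast
  ultimately show ?thesis
    unfolding bij_betw_def using endo_inj_surj[OF finite_schroeder] by blast
qed

lemma avoids_incr_pat_iff_avoids_swap12_pat:
  assumes "pi \<in> schroeder n" "3 \<le> k"
  shows "avoids pi (incr_pat k) \<longleftrightarrow> avoids (omega pi) (swap12_pat k)"
  using corresponds_omega assms
  by (simp add: avoids_def contains_incr_pat contains_swap12_pat schroeder_iff corresponds_def)

theorem corollary3p4:
  fixes n :: nat
  assumes "n \<ge> 1"
  shows "\<exists>\<omega>. bij_betw \<omega> (schroeder n) (schroeder n) \<and>
           (\<forall>k \<ge> 3. \<forall>pi \<in> schroeder n.
              avoids pi (incr_pat k) \<longleftrightarrow> avoids (\<omega> pi) (swap12_pat k))"
  using bij_betw_omega avoids_incr_pat_iff_avoids_swap12_pat by blast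

end
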